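(* Let $\mathcal{X}\in\mathbb{IR}^n$, $\mathcal{U}\in\mathbb{IR}^m$ be boxes, $N\in\mathbb{N}$, and let $c:\mathcal{X}\times\mathcal{U}\times\mathcal{X}\to\mathbb{R}$ be Lipschitz with constant $L_c$ with respect to the Euclidean norm on $\mathbb{R}^{n}\times\mathbb{R}^m\times\mathbb{R}^n$. Let $x^j\in\mathcal{X}$ be the known current state, and for each $q$ let $\Phi_q(x,u)=x(t_{q+1};x,u)\in\mathcal{X}$ denote the (unknown) true state at $t_{q+1}$ reached from state $x$ at $t_q$ under constant control $u$. Let $\mathcal{R}^j_{\mathcal{U}}=\{x^j\}$ and let $\mathcal{R}^{q+1}_{\mathcal{U}}\in\mathbb{IR}^n$, $q=j,\dots,j+N$, be over-approximations of the reachable set at $t_{q+1}$ from $\mathcal{R}^q_{\mathcal{U}}$ under all controls in $\mathcal{U}$, in the sense that for every $x\in\mathcal{R}^q_{\mathcal{U}}$ and $u\in\mathcal{U}$ both the true successor $\Phi_q(x,u)$ and the model's predicted successor $\hat h_q(x,u)$ lie in $\mathcal{R}^{q+1}_{\mathcal{U}}$, where $\hat h_q:\mathcal{X}\times\mathcal{U}\to\mathcal{X}$ is the one-step predictor picked inside the data-driven over-approximation of the reachable set. Let $$C_j^\star=\inf_{u^j,\dots,u^{j+N}\in\mathcal{U}}\sum_{q=j}^{j+N}c(x^q,u^q,x^{q+1}),\quad x^{q+1}=\Phi_q(x^q,u^q),$$ $$\hat C_j=\inf_{u^j,\dots,u^{j+N}\in\mathcal{U}}\sum_{q=j}^{j+N}c(\hat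 x^q,u^q,\hat x^{q+1}),\quad \hat x^j=x^j,\ \hat x^{q+1}=\hat h_q(\hat x^q,u^q).$$ Then $$|C_j^\star-\hat C_j|\le L_c\Big(\|\mathrm{wd}(\mathcal{R}^{j+N+1}_{\mathcal{U}})\|_2+\sum_{q=j+1}^{j+N}2\,\|\mathrm{wd}(\mathcal{R}^q_{\mathcal{U}})\|_2\Big).$$
   Context: $\mathbb{IR}^n$ denotes $n$-dimensional interval vectors (boxes). For an interval vector $\mathcal{A}=[\underline{\mathcal{A}},\overline{\mathcal{A}}]$, $\mathrm{wd}(\mathcal{A})=\overline{\mathcal{A}}-\underline{\mathcal{A}}\in\mathbb{R}^n$ is its componentwise width and $\|\cdot\|_2$ the Euclidean norm. The underlying system is $\dot x=f(x)+\sum_{p=1}^dg_p(x)u[\alpha^p]$ with unknown $f,g_p$, sampled at times $t_q=t_j+(q-j)\Delta t$, with control held constant on each $[t_q,t_{q+1}]$; the sets $\mathcal{R}^{q+1}_{\mathcal{U}}$ are computed by the data-driven interval Taylor over-approximation formula applied to the initial set $\mathcal{R}^q_{\mathcal{U}}$ with the control value replaced by the box $\mathcal{U}$. *)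

theory Defs
  imports "HOL-Analysis.Analysis"
begin

text \<open>State trajectory starting at absolute time index j from x0, under the one-step
  map F q x u (time index q) and control sequence us (indexed by absolute time q).
  traj F j x0 us k is the state at absolute time index j + k.\<close>
fun traj :: "(nat \<Rightarrow> 'x \<Rightarrow> 'u \<Rightarrow> 'x) \<Rightarrow> nat \<Rightarrow> 'x \<Rightarrow> (nat \<Rightarrow> 'u) \<Rightarrow> nat \<Rightarrow> 'x" where
  "traj F j x0 us 0 = x0"
| "traj F j x0 us (Suc k) = F (j + k) (traj F j x0 us k) (us (j + k))"

definition horizon_cost ::
  "('x \<times> 'u \<times> 'x \<Rightarrow> real) \<Rightarrow> (nat \<Rightarrow> 'x \<Rightarrow> 'u \<Rightarrow> 'x) \<Rightarrow> nat \<Rightarrow> nat \<Rightarrow> 'x \<Rightarrow> (nat \<Rightarrow> 'u) \<Rightarrow> real" where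
  "horizon_cost c F j N x0 us =
     (\<Sum>k\<le>N. c (traj F j x0 us k, us (j + k), traj F j x0 us (Suc k)))"

definition opt_cost ::
  "('x \<times> 'u \<times> 'x \<Rightarrow> real) \<Rightarrow> (nat \<Rightarrow> 'x \<Rightarrow> 'u \<Rightarrow> 'x) \<Rightarrow> nat \<Rightarrow> nat \<Rightarrow> 'x \<Rightarrow> 'u set \<Rightarrow> real" where
  "opt_cost c F j N x0 U =
     (INF us \<in> {us. \<forall>q\<in>{j..j+N}. us q \<in> U}. horizon_cost c F j N x0 us)"

definition wd :: "'a::ab_group_add \<Rightarrow> 'a \<Rightarrow> 'a" where
  "wd lo hi = hi - lo"

end

theory Submission
  imports Defs
begin

text \<open>For a fixed admissible control sequence, the true and the predicted trajectory both
  start at \<open>x\<^sup>j\<close> and stay in the boxes \<open>\<R>\<^sup>q\<close>, so at time \<open>q\<close> they are at most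
  \<open>\<parallel>wd(\<R>\<^sup>q)\<parallel>\<^sub>2\<close> apart. By the Lipschitz property the \<open>q\<close>-th stage costs differ by at most
  \<open>L\<^sub>c\<close> times the distances at times \<open>q\<close> and \<open>q+1\<close>; summing, every intermediate box
  is counted twice and the last one once. A uniform bound on the difference of two
  families of costs bounds the difference of their infima.\<close>

lemma traj_mem:
  assumes step: "\<And>q x u. q \<in> {j..j+N} \<Longrightarrow> x \<in> R q \<Longrightarrow> u \<in> U \<Longrightarrow> F q x u \<in> R (Suc q)"
    and x0: "x0 \<in> R j" and adm: "\<forall>q\<in>{j..j+N}. us q \<in> U"
    and k: "k \<le> N + 1"
  shows "traj F j x0 us k \<in> R (j + k)"
  using k
proof (induction k)
  case 0
  then show ?case using x0 by simp
next
  case (Suc k)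
  then have "traj F j x0 us k \<in> R (j + k)" and "j + k \<in> {j..j+N}" by simp_all
  then show ?case using step adm by simp
qed

lemma dist_le_norm_wd:
  fixes x y a b :: "'a::euclidean_space"
  assumes "x \<in> cbox a b" "y \<in> cbox a b"
  shows "dist x y \<le> norm (wd a b)"
  unfolding dist_norm wd_def
proof (rule norm_le_componentwise)
  fix i :: 'a
  assume "i \<in> Basis"
  then have "a \<bullet> i \<le> x \<bullet> i" "x \<bullet> i \<le> b \<bullet> i" "a \<bullet> i \<le> y \<bullet> i" "y \<bullet> i \<le> b \<bullet> i"
    using assms by (auto simp: mem_box)
  then show "\<bar>(x - y) \<bullet> i\<bar> \<le> \<bar>(b - a) \<bullet> i\<bar>" by (simp add: inner_diff_left)
qed

lemma dist_Pair_Pair_same_middle: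
  fixes a a' :: "'a::metric_space" and u :: "'b::metric_space" and b b' :: "'c::metric_space"
  shows "dist (a, u, b) (a', u, b') \<le> dist a a' + dist b b'"
proof -
  have "dist (a, u, b) (a', u, b') = sqrt ((dist a a')\<^sup>2 + (dist b b')\<^sup>2)"
    by (simp add: dist_Pair_Pair)
  also have "\<dots> \<le> sqrt ((dist a a')\<^sup>2) + sqrt ((dist b b')\<^sup>2)"
    by (rule sqrt_add_le_add_sqrt) auto
  finally show ?thesis by simp
qed

lemma sum_atMost_adjacent:
  fixes f :: "nat \<Rightarrow> 'a::comm_semiring_1"
  shows "(\<Sum>k\<le>N. f k + f (Suc k)) = f 0 + 2 * (\<Sum>k\<in>{1..N}. f k) + f (Suc N)"
  by (induction N) (simp_all add: algebra_simps mult_2)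

lemma abs_cINF_diff_le:
  fixes f g :: "'a \<Rightarrow> real"
  assumes ne: "S \<noteq> {}" and bdd: "bdd_below (f ` S)"
    and fg: "\<And>s. s \<in> S \<Longrightarrow> \<bar>f s - g s\<bar> \<le> B"
  shows "\<bar>(INF s\<in>S. f s) - (INF s\<in>S. g s)\<bar> \<le> B"
proof -
  obtain m where m: "\<And>s. s \<in> S \<Longrightarrow> m \<le> f s"
    using bdd by (auto simp: bdd_below_def)
  have bddg: "bdd_below (g ` S)"
    by (rule bdd_belowI2[of _ "m - B"]) (use m fg in force)
  have "(INF s\<in>S. f s) - B \<le> (INF s\<in>S. g s)"
    by (rule cINF_greatest[OF ne]) (use cINF_lower[OF bdd] fg in force)
  moreover have "(INF s\<in>S. g s) - B \<le> (INF s\<in>S. f s)"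
    by (rule cINF_greatest[OF ne]) (use cINF_lower[OF bddg] fg in force)
  ultimately show ?thesis by linarith
qed

lemma bdd_below_horizon_cost:
  assumes "compact X" "compact U" "continuous_on (X \<times> U \<times> X) c"
    and step: "\<And>q x u. x \<in> X \<Longrightarrow> u \<in> U \<Longrightarrow> F q x u \<in> X" and x0: "x0 \<in> X"
  shows "bdd_below (horizon_cost c F j N x0 ` {us. \<forall>q\<in>{j..j+N}. us q \<in> U})"
proof -
  have "bounded (c ` (X \<times> U \<times> X))"
    using assms by (intro compact_imp_bounded compact_continuous_image compact_Times)
  then obtain M where M: "\<And>p. p \<in> X \<times> U \<times> X \<Longrightarrow> M \<le> c p"
    by (meson bdd_below.E bounded_imp_bdd_below imageI)
  show ?thesis
  proof (rule bdd_belowI2)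
    fix us
    assume adm: "us \<in> {us. \<forall>q\<in>{j..j+N}. us q \<in> U}"
    have in_X: "traj F j x0 us k \<in> X" if "k \<le> N + 1" for k
      using traj_mem[where R = "\<lambda>_. X"] step x0 adm that by blast
    have "M \<le> c (traj F j x0 us k, us (j + k), traj F j x0 us (Suc k))" if "k \<le> N" for k
      using adm in_X[of k] in_X[of "Suc k"] that by (intro M) auto
    then show "(\<Sum>k\<le>N. M) \<le> horizon_cost c F j N x0 us"
      unfolding horizon_cost_def by (intro sum_mono) auto
  qed
qed

lemma horizon_cost_diff_le:
  fixes c :: "'x::metric_space \<times> 'u::metric_space \<times> 'x \<Rightarrow> real"
  assumes lip: "lipschitz_on L (X \<times> U \<times> X) c"
    and adm: "\<And>k. k \<le> N \<Longrightarrow> us (j + k) \<in> U"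
    and in_X: "\<And>k. k \<le> N + 1 \<Longrightarrow> traj F j x0 us k \<in> X \<and> traj G j y0 us k \<in> X"
  shows "\<bar>horizon_cost c F j N x0 us - horizon_cost c G j N y0 us\<bar>
    \<le> L * (\<Sum>k\<le>N. dist (traj F j x0 us k) (traj G j y0 us k)
                   + dist (traj F j x0 us (Suc k)) (traj G j y0 us (Suc k)))"
proof -
  let ?x = "traj F j x0 us" and ?y = "traj G j y0 us"
  have stage: "\<bar>c (?x k, us (j + k), ?x (Suc k)) - c (?y k, us (j + k), ?y (Suc k))\<bar>
      \<le> L * (dist (?x k) (?y k) + dist (?x (Suc k)) (?y (Suc k)))" if "k \<le> N" for k
  proof -
    have "(?x k, us (j + k), ?x (Suc k)) \<in> X \<times> U \<times> X"
      and "(?y k, us (j + k), ?y (Suc k)) \<in> X \<times> U \<times> X"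
      using in_X[of k] in_X[of "Suc k"] adm that by (simp_all del: traj.simps)
    then have "dist (c (?x k, us (j + k), ?x (Suc k))) (c (?y k, us (j + k), ?y (Suc k)))
        \<le> L * dist (?x k, us (j + k), ?x (Suc k)) (?y k, us (j + k), ?y (Suc k))"
      using lip by (rule lipschitz_onD[rotated])
    also have "\<dots> \<le> L * (dist (?x k) (?y k) + dist (?x (Suc k)) (?y (Suc k)))"
      by (intro mult_left_mono dist_Pair_Pair_same_middle lipschitz_on_nonneg[OF lip])
    finally show ?thesis by (simp add: dist_real_def)
  qed
  have "\<bar>horizon_cost c F j N x0 us - horizon_cost c G j N y0 us\<bar>
      \<le> (\<Sum>k\<le>N. \<bar>c (?x k, us (j + k), ?x (Suc k)) - c (?y k, us (j + k), ?y (Suc k))\<bar>)"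
    unfolding horizon_cost_def sum_subtractf[symmetric] by (rule sum_abs)
  also have "\<dots> \<le> (\<Sum>k\<le>N. L * (dist (?x k) (?y k) + dist (?x (Suc k)) (?y (Suc k))))"
    by (rule sum_mono) (use stage in auto)
  finally show ?thesis by (simp add: sum_distrib_left)
qed

lemma sum_adjacent_dist_le_widths:
  fixes x y :: "nat \<Rightarrow> 'a::euclidean_space"
  assumes "x 0 = y 0"
    and in_box: "\<And>k. 1 \<le> k \<Longrightarrow> k \<le> N + 1 \<Longrightarrow>
                   x k \<in> cbox (Rl (j + k)) (Ru (j + k)) \<and> y k \<in> cbox (Rl (j + k)) (Ru (j + k))"
  shows "(\<Sum>k\<le>N. dist (x k) (y k) + dist (x (Suc k)) (y (Suc k)))
    \<le> norm (wd (Rl (j+N+1)) (Ru (j+N+1))) + (\<Sum>q\<in>{j+1..j+N}. 2 * norm (wd (Rl q) (Ru q)))"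
proof -
  let ?w = "\<lambda>q. norm (wd (Rl q) (Ru q))"
  have dist_le: "dist (x k) (y k) \<le> ?w (j + k)" if "1 \<le> k" "k \<le> N + 1" for k
    using in_box[OF that] by (auto intro: dist_le_norm_wd)
  have "(\<Sum>k\<le>N. dist (x k) (y k) + dist (x (Suc k)) (y (Suc k)))
      = 2 * (\<Sum>k\<in>{1..N}. dist (x k) (y k)) + dist (x (N + 1)) (y (N + 1))"
    unfolding sum_atMost_adjacent[of "\<lambda>k. dist (x k) (y k)"] using assms(1) by simp
  also have "\<dots> \<le> 2 * (\<Sum>k\<in>{1..N}. ?w (j + k)) + ?w (j + N + 1)"
    using dist_le dist_le[of "N + 1"] by (intro add_mono mult_left_mono sum_mono) auto
  also have "(\<Sum>k\<in>{1..N}. ?w (j + k)) = (\<Sum>q\<in>{j+1..j+N}. ?w q)"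
    using sum.shift_bounds_cl_nat_ivl[of ?w 1 j N] by (simp add: add.commute)
  finally show ?thesis by (simp add: sum_distrib_left)
qed

lemma horizon_cost_diff_le_widths:
  fixes c :: "'x::euclidean_space \<times> 'u::metric_space \<times> 'x \<Rightarrow> real"
  assumes lip: "lipschitz_on L (X \<times> U \<times> X) c"
    and F_X: "\<And>q x u. x \<in> X \<Longrightarrow> u \<in> U \<Longrightarrow> F q x u \<in> X"
    and G_X: "\<And>q x u. x \<in> X \<Longrightarrow> u \<in> U \<Longrightarrow> G q x u \<in> X"
    and x0: "x0 \<in> X" and R_j: "R j = {x0}"
    and R_box: "\<And>q. q \<in> {j+1..j+N+1} \<Longrightarrow> R q = cbox (Rl q) (Ru q)"
    and R_over: "\<And>q x u. q \<in> {j..j+N} \<Longrightarrow> x \<in> R q \<Longrightarrow> u \<in> U \<Longrightarrow>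
                   F q x u \<in> R (Suc q) \<and> G q x u \<in> R (Suc q)"
    and adm: "\<forall>q\<in>{j..j+N}. us q \<in> U"
  shows "\<bar>horizon_cost c F j N x0 us - horizon_cost c G j N x0 us\<bar>
    \<le> L * (norm (wd (Rl (j+N+1)) (Ru (j+N+1))) + (\<Sum>q\<in>{j+1..j+N}. 2 * norm (wd (Rl q) (Ru q))))"
proof -
  let ?x = "traj F j x0 us" and ?y = "traj G j x0 us"
  have in_X: "?x k \<in> X \<and> ?y k \<in> X" if "k \<le> N + 1" for k
    using traj_mem[where R = "\<lambda>_. X", OF _ x0 adm that] F_X G_X by simp
  have in_R: "?x k \<in> R (j + k) \<and> ?y k \<in> R (j + k)" if "k \<le> N + 1" for k
    using traj_mem[where R = R, OF _ _ adm that] R_over R_j by simp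
  have in_box: "?x k \<in> cbox (Rl (j + k)) (Ru (j + k)) \<and> ?y k \<in> cbox (Rl (j + k)) (Ru (j + k))"
    if "1 \<le> k" "k \<le> N + 1" for k
    using in_R[OF that(2)] R_box[of "j + k"] that by simp
  have "\<bar>horizon_cost c F j N x0 us - horizon_cost c G j N x0 us\<bar>
      \<le> L * (\<Sum>k\<le>N. dist (?x k) (?y k) + dist (?x (Suc k)) (?y (Suc k)))"
    using adm in_X by (intro horizon_cost_diff_le[OF lip]) auto
  also have "\<dots> \<le> L * (norm (wd (Rl (j+N+1)) (Ru (j+N+1)))
      + (\<Sum>q\<in>{j+1..j+N}. 2 * norm (wd (Rl q) (Ru q))))"
    using in_box lipschitz_on_nonneg[OF lip]
    by (intro mult_left_mono sum_adjacent_dist_le_widths) simp_all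
  finally show ?thesis .
qed

theorem theorem3:
  fixes xl xu :: "real ^ 'n" and ul uu :: "real ^ 'm"
    and N j :: nat
    and c :: "(real ^ 'n) \<times> (real ^ 'm) \<times> (real ^ 'n) \<Rightarrow> real" and Lc :: real
    and xj :: "real ^ 'n"
    and \<Phi> hhat :: "nat \<Rightarrow> real ^ 'n \<Rightarrow> real ^ 'm \<Rightarrow> real ^ 'n"
    and Rl Ru :: "nat \<Rightarrow> real ^ 'n"
    and R :: "nat \<Rightarrow> (real ^ 'n) set"
  assumes X_box: "xl \<le> xu" and U_box: "ul \<le> uu"
    and lip: "lipschitz_on Lc (cbox xl xu \<times> cbox ul uu \<times> cbox xl xu) c"
    and xj_in: "xj \<in> cbox xl xu"
    and Phi_X: "\<And>q x u. x \<in> cbox xl xu \<Longrightarrow> u \<in> cbox ul uu \<Longrightarrow> \<Phi> q x u \<in> cbox xl xu"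
    and hhat_X: "\<And>q x u. x \<in> cbox xl xu \<Longrightarrow> u \<in> cbox ul uu \<Longrightarrow> hhat q x u \<in> cbox xl xu"
    and R_j: "R j = {xj}"
    and R_box: "\<And>q. q \<in> {j+1..j+N+1} \<Longrightarrow> R q = cbox (Rl q) (Ru q)"
    and R_over: "\<And>q x u. q \<in> {j..j+N} \<Longrightarrow> x \<in> R q \<Longrightarrow> u \<in> cbox ul uu \<Longrightarrow>
                   \<Phi> q x u \<in> R (Suc q) \<and> hhat q x u \<in> R (Suc q)"
  shows "\<bar>opt_cost c \<Phi> j N xj (cbox ul uu) - opt_cost c hhat j N xj (cbox ul uu)\<bar>
           \<le> Lc * (norm (wd (Rl (j+N+1)) (Ru (j+N+1)))
                   + (\<Sum>q\<in>{j+1..j+N}. 2 * norm (wd (Rl q) (Ru q))))"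
proof -
  let ?S = "{us. \<forall>q\<in>{j..j+N}. us q \<in> cbox ul uu}"
  have "(\<lambda>_. ul) \<in> ?S"
    using U_box by (simp add: mem_box_cart less_eq_vec_def)
  then have "?S \<noteq> {}" by (metis empty_iff)
  moreover have "bdd_below (horizon_cost c \<Phi> j N xj ` ?S)"
    using lipschitz_on_continuous_on[OF lip] Phi_X xj_in by (intro bdd_below_horizon_cost) auto
  moreover have "\<bar>horizon_cost c \<Phi> j N xj us - horizon_cost c hhat j N xj us\<bar>
      \<le> Lc * (norm (wd (Rl (j+N+1)) (Ru (j+N+1)))
              + (\<Sum>q\<in>{j+1..j+N}. 2 * norm (wd (Rl q) (Ru q))))" if "us \<in> ?S" for us
    using that by (intro horizon_cost_diff_le_widths[OF lip Phi_X hhat_X xj_in R_j R_box R_over]) auto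
  ultimately show ?thesis
    unfolding opt_cost_def by (rule abs_cINF_diff_le)
qed

end
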